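(* Let $t_0\in[1/2,1]$ be a point where $t\mapsto\left[2t^{4/3}+2(\sqrt{t(1-t)})^{4/3}\right]^{3/4}$ attains its maximum on $[1/2,1]$ ($t_0\approx0.9147$). For every $k\in\mathbb{N}$, $$L_{\mathbb{R},2k}\ge\left[\sum_{j=0}^{2k}\binom{2k}{j}\left|\frac{A_j}{\binom{2k}{j}}\right|^{\frac{4k}{2k+1}}\right]^{\frac{2k+1}{4k}},$$ where $$A_j=\sum_{\ell=0}^{\lfloor j/2\rfloor}\frac{k!\,(-1)^{k-j+\ell}\,t_0^{k-j+2\ell}\,\big(2\sqrt{t_0(1-t_0)}\big)^{j-2\ell}}{\ell!\,(j-2\ell)!\,(k-j+\ell)!},\qquad j=0,\dots,2k$$ (terms with $k-j+\ell<0$ being $0$); these $A_j$ are the coefficients of $x^jy^{2k-j}$ in $(t_0x^2-t_0y^2+2\sqrt{t_0(1-t_0)}\,xy)^k$.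
   Context: All spaces are real. $\check P$ is the polar of an $m$-homogeneous polynomial $P$ (the unique symmetric $m$-linear form with $\check P(x,\dots,x)=P(x)$). For $x_1,\dots,x_N$ in a Banach space $X$, $\|(x_j)\|_{w,1}=\sup\{\sum_j|\varphi(x_j)|:\varphi\in X',\|\varphi\|\le1\}$. $L_{\mathbb{R},m}$ is the smallest constant $L$ such that for every real Banach space $X$, every continuous $m$-homogeneous $P:X\to\mathbb{R}$, every $N$ and all $x^{(k)}_j\in X$: $\big(\sum_{j_1,\dots,j_m=1}^N|\check P(x^{(1)}_{j_1},\dots,x^{(m)}_{j_m})|^{\frac{2m}{m+1}}\big)^{\frac{m+1}{2m}}\le L\|P\|\prod_{k=1}^m\|(x^{(k)}_j)_{j=1}^N\|_{w,1}$. $\lfloor h\rfloor$ is the integer part. *)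

theory Defs
  imports Complex_Main "HOL-Combinatorics.Permutations"
begin

text \<open>Real Banach spaces are represented concretely as a linear subspace V of the
  real vector space (nat => real) together with a complete norm nu on V.
  Vectors are added and scaled pointwise.\<close>

type_synonym vec = "nat \<Rightarrow> real"

definition vadd :: "vec \<Rightarrow> vec \<Rightarrow> vec" where
  "vadd x y = (\<lambda>i. x i + y i)"

definition vsub :: "vec \<Rightarrow> vec \<Rightarrow> vec" where
  "vsub x y = (\<lambda>i. x i - y i)"

definition vscale :: "real \<Rightarrow> vec \<Rightarrow> vec" where
  "vscale c x = (\<lambda>i. c * x i)"

definition is_banach_str :: "vec set \<Rightarrow> (vec \<Rightarrow> real) \<Rightarrow> bool" where
  "is_banach_str V nu \<longleftrightarrow>
     (\<lambda>i. 0) \<in> V \<and>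
     (\<forall>x\<in>V. \<forall>y\<in>V. vadd x y \<in> V) \<and>
     (\<forall>x\<in>V. \<forall>c. vscale c x \<in> V) \<and>
     (\<forall>x\<in>V. nu x \<ge> 0) \<and>
     (\<forall>x\<in>V. nu x = 0 \<longleftrightarrow> x = (\<lambda>i. 0)) \<and>
     (\<forall>x\<in>V. \<forall>c. nu (vscale c x) = \<bar>c\<bar> * nu x) \<and>
     (\<forall>x\<in>V. \<forall>y\<in>V. nu (vadd x y) \<le> nu x + nu y) \<and>
     (\<forall>s::nat \<Rightarrow> vec. (\<forall>n. s n \<in> V) \<longrightarrow>
        (\<forall>e>0. \<exists>M. \<forall>p\<ge>M. \<forall>q\<ge>M. nu (vsub (s p) (s q)) < e) \<longrightarrow>
        (\<exists>l\<in>V. \<forall>e>0. \<exists>M. \<forall>p\<ge>M. nu (vsub (s p) l) < e))"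

definition linear_on :: "vec set \<Rightarrow> (vec \<Rightarrow> real) \<Rightarrow> bool" where
  "linear_on V phi \<longleftrightarrow>
     (\<forall>x\<in>V. \<forall>y\<in>V. phi (vadd x y) = phi x + phi y) \<and>
     (\<forall>x\<in>V. \<forall>c. phi (vscale c x) = c * phi x)"

definition dual_ball :: "vec set \<Rightarrow> (vec \<Rightarrow> real) \<Rightarrow> (vec \<Rightarrow> real) set" where
  "dual_ball V nu = {phi. linear_on V phi \<and> (\<forall>x\<in>V. \<bar>phi x\<bar> \<le> nu x)}"

definition weak1_norm :: "vec set \<Rightarrow> (vec \<Rightarrow> real) \<Rightarrow> nat \<Rightarrow> (nat \<Rightarrow> vec) \<Rightarrow> real" where
  "weak1_norm V nu N x = (SUP phi\<in>dual_ball V nu. (\<Sum>j<N. \<bar>phi (x j)\<bar>))"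

text \<open>m-linear forms: A takes a sequence of arguments, only the first m matter.\<close>
definition sym_multilinear_bdd :: "vec set \<Rightarrow> (vec \<Rightarrow> real) \<Rightarrow> nat \<Rightarrow> ((nat \<Rightarrow> vec) \<Rightarrow> real) \<Rightarrow> bool" where
  "sym_multilinear_bdd V nu m A \<longleftrightarrow>
     (\<forall>v w. (\<forall>i<m. v i = w i) \<longrightarrow> A v = A w) \<and>
     (\<forall>v i y. (\<forall>j<m. v j \<in> V) \<longrightarrow> i < m \<longrightarrow> y \<in> V \<longrightarrow>
          A (v(i := vadd (v i) y)) = A v + A (v(i := y))) \<and>
     (\<forall>v i c. (\<forall>j<m. v j \<in> V) \<longrightarrow> i < m \<longrightarrow>
          A (v(i := vscale c (v i))) = c * A v) \<and>
     (\<forall>v \<sigma>. \<sigma> permutes {..<m} \<longrightarrow> A (v \<circ> \<sigma>) = A v) \<and>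
     (\<exists>C. \<forall>v. (\<forall>j<m. v j \<in> V) \<longrightarrow> \<bar>A v\<bar> \<le> C * (\<Prod>j<m. nu (v j)))"

definition poly_norm :: "vec set \<Rightarrow> (vec \<Rightarrow> real) \<Rightarrow> ((nat \<Rightarrow> vec) \<Rightarrow> real) \<Rightarrow> real" where
  "poly_norm V nu A = (SUP x\<in>{x\<in>V. nu x \<le> 1}. \<bar>A (\<lambda>_. x)\<bar>)"

text \<open>L is an admissible constant in the polynomial Bohnenblust--Hille type inequality
  of degree m (for all real Banach spaces in the above representation).
  A is the polar of P, P x = A(x,...,x).\<close>
definition BH_admissible :: "nat \<Rightarrow> real \<Rightarrow> bool" where
  "BH_admissible m L \<longleftrightarrow>
     (\<forall>V nu A N x. is_banach_str V nu \<longrightarrow> sym_multilinear_bdd V nu m A \<longrightarrow>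
        (\<forall>k<m. \<forall>j<N. x k j \<in> V) \<longrightarrow>
        (\<Sum>jj\<in>PiE {..<m} (\<lambda>_. {..<N}). \<bar>A (\<lambda>k. x k (jj k))\<bar> powr (2 * real m / (real m + 1)))
            powr ((real m + 1) / (2 * real m))
        \<le> L * poly_norm V nu A * (\<Prod>k<m. weak1_norm V nu N (x k)))"

definition f_t :: "real \<Rightarrow> real" where
  "f_t t = (2 * t powr (4/3) + 2 * (sqrt (t * (1 - t))) powr (4/3)) powr (3/4)"

definition coeffA :: "real \<Rightarrow> nat \<Rightarrow> nat \<Rightarrow> real" where
  "coeffA t0 k j = (\<Sum>l=0..j div 2.
     (if j \<le> k + l then
        fact k * (-1) ^ (k + l - j) * t0 ^ (k + 2 * l - j) * (2 * sqrt (t0 * (1 - t0))) ^ (j - 2 * l)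
        / (fact l * fact (j - 2 * l) * fact (k + l - j))
      else 0))"

end

theory Submission
  imports Defs
begin

(* The inequality defining an admissible constant L is tested on the simplest
   possible data: the plane with the max-norm, l_inf^2 (modelled as the vectors
   supported on {0,1}), and the two unit vectors e_0, e_1, whose weak 1-norm is 1.

   1. l_inf^2 is a Banach space in the sense of Defs and ||(e_0,e_1)||_{w,1} = 1.
   2. Every sequence c_0,...,c_m defines the symmetric m-linear form
        sym_form m c v = sum_{S <= {0..m-1}} c_|S| prod_{i in S} v_i(0) prod_{i notin S} v_i(1)
      on l_inf^2.  Its value at (e_{j_1},...,e_{j_m}) is c_(number of j_i = 0), and
      its diagonal is the polynomial sum_j C(m,j) c_j x^j y^(m-j).  Counting the
      index tuples by their number of zeros turns the Bohnenblust--Hille inequality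
      into  (sum_j C(m,j) |c_j|^(2m/(m+1)))^((m+1)/(2m)) <= L ||P_c||  (BH_lower_bound).
   3. By the trinomial expansion, the A_j of the paper are the coefficients of
      q^k, q(x,y) = t x^2 - t y^2 + 2 sqrt(t(1-t)) xy, and |q| <= 1 on the unit square
      for 0 <= t <= 1.  With c_j = A_j / C(2k,j) the polynomial is q^k, whose norm
      lies in (0,1], and the theorem follows.
   The maximality of t0 only selects the best of these bounds. *)

definition V2 :: "vec set" where
  "V2 = {x. \<forall>i\<ge>2. x i = 0}"

definition nu2 :: "vec \<Rightarrow> real" where
  "nu2 x = max \<bar>x 0\<bar> \<bar>x 1\<bar>"

definition unit_vec :: "nat \<Rightarrow> vec" where
  "unit_vec j = (\<lambda>i. if i = j then 1 else 0)"

lemma coord_le_nu2: "\<bar>x 0\<bar> \<le> nu2 x" "\<bar>x 1\<bar> \<le> nu2 x"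
  by (auto simp: nu2_def)

lemma unit_vec_in_V2: "j < 2 \<Longrightarrow> unit_vec j \<in> V2"
  by (auto simp: V2_def unit_vec_def)

(* Completeness of l_inf^2: a Cauchy sequence converges coordinatewise. *)
lemma V2_complete:
  fixes s :: "nat \<Rightarrow> vec"
  assumes "\<forall>e>0. \<exists>M. \<forall>p\<ge>M. \<forall>q\<ge>M. nu2 (vsub (s p) (s q)) < e"
  shows "\<exists>l\<in>V2. \<forall>e>0. \<exists>M. \<forall>p\<ge>M. nu2 (vsub (s p) l) < e"
proof -
  have "Cauchy (\<lambda>n. s n i)" if "i \<le> 1" for i :: nat
  proof (rule metric_CauchyI)
    fix e :: real assume "e > 0"
    then obtain M where M: "\<forall>p\<ge>M. \<forall>q\<ge>M. nu2 (vsub (s p) (s q)) < e" using assms by blast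
    have diff: "\<bar>s p i - s q i\<bar> \<le> nu2 (vsub (s p) (s q))" for p q
      using that coord_le_nu2[of "vsub (s p) (s q)"] by (cases i) (auto simp: vsub_def)
    show "\<exists>M. \<forall>p\<ge>M. \<forall>q\<ge>M. dist (s p i) (s q i) < e"
    proof (intro exI allI impI)
      fix p q assume "p \<ge> M" "q \<ge> M"
      then show "dist (s p i) (s q i) < e"
        using M diff[of p q] by (fastforce simp: dist_real_def)
    qed
  qed
  then obtain a0 a1 where a0: "(\<lambda>n. s n 0) \<longlonglongrightarrow> a0" and a1: "(\<lambda>n. s n 1) \<longlonglongrightarrow> a1"
    by (meson Cauchy_convergent convergent_def le_refl zero_le_one)
  define l :: vec where "l = (\<lambda>i. if i = 0 then a0 else if i = 1 then a1 else 0)"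
  have "\<exists>M. \<forall>p\<ge>M. nu2 (vsub (s p) l) < e" if e: "e > 0" for e
  proof -
    obtain M0 where M0: "\<forall>p\<ge>M0. \<bar>s p 0 - a0\<bar> < e"
      using LIMSEQ_D[OF a0 e] by (auto simp: real_norm_def)
    obtain M1 where M1: "\<forall>p\<ge>M1. \<bar>s p 1 - a1\<bar> < e"
      using LIMSEQ_D[OF a1 e] by (auto simp: real_norm_def)
    show ?thesis
      by (rule exI[of _ "max M0 M1"]) (auto simp: nu2_def vsub_def l_def M0 M1[simplified])
  qed
  moreover have "l \<in> V2" by (auto simp: l_def V2_def)
  ultimately show ?thesis by blast
qed

lemma banach_V2: "is_banach_str V2 nu2"
  unfolding is_banach_str_def
proof (intro conjI ballI allI impI)
  fix x assume x: "x \<in> V2"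
  show "nu2 x = 0 \<longleftrightarrow> x = (\<lambda>i. 0)"
  proof
    assume "nu2 x = 0"
    then have "x 0 = 0" "x 1 = 0" using coord_le_nu2[of x] by auto
    moreover have "x i = 0" if "i \<ge> 2" for i using x that by (simp add: V2_def)
    ultimately show "x = (\<lambda>i. 0)"
      by (metis One_nat_def less_2_cases not_le)
  qed (simp add: nu2_def)
next
  fix x y show "nu2 (vadd x y) \<le> nu2 x + nu2 y"
    by (simp add: nu2_def vadd_def) linarith
next
  fix s :: "nat \<Rightarrow> vec"
  assume "\<forall>e>0. \<exists>M. \<forall>p\<ge>M. \<forall>q\<ge>M. nu2 (vsub (s p) (s q)) < e"
  then show "\<exists>l\<in>V2. \<forall>e>0. \<exists>M. \<forall>p\<ge>M. nu2 (vsub (s p) l) < e" by (rule V2_complete)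
qed (simp_all add: V2_def nu2_def vadd_def vscale_def abs_mult max_mult_distrib_left)

(* ||(e_0,e_1)||_{w,1} = 1: a norm-one functional phi has |phi e_0| + |phi e_1| =
   phi(+-e_0 +- e_1) <= 1, and the first coordinate attains 1. *)
lemma weak1_norm_unit_vecs: "weak1_norm V2 nu2 2 unit_vec = 1"
  unfolding weak1_norm_def
proof (rule antisym)
  have bound: "(\<Sum>j<2. \<bar>phi (unit_vec j)\<bar>) \<le> 1" if "phi \<in> dual_ball V2 nu2" for phi
  proof -
    have lin: "linear_on V2 phi" and bd: "\<forall>x\<in>V2. \<bar>phi x\<bar> \<le> nu2 x"
      using that by (auto simp: dual_ball_def)
    define a :: real where "a = sgn (phi (unit_vec 0))"
    define b :: real where "b = sgn (phi (unit_vec 1))"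
    define w where "w = vadd (vscale a (unit_vec 0)) (vscale b (unit_vec 1))"
    have in_V2: "unit_vec 0 \<in> V2" "unit_vec 1 \<in> V2" "vscale a (unit_vec 0) \<in> V2"
        "vscale b (unit_vec 1) \<in> V2" "w \<in> V2"
      by (auto simp: V2_def unit_vec_def vscale_def vadd_def w_def)
    have "phi w = a * phi (unit_vec 0) + b * phi (unit_vec 1)"
      using lin in_V2 unfolding w_def linear_on_def by simp
    also have "\<dots> = \<bar>phi (unit_vec 0)\<bar> + \<bar>phi (unit_vec 1)\<bar>"
      by (simp add: a_def b_def abs_sgn mult.commute)
    finally have "phi w = (\<Sum>j<2. \<bar>phi (unit_vec j)\<bar>)" by (simp add: numeral_2_eq_2)
    moreover have "nu2 w \<le> 1"
      by (simp add: nu2_def w_def vadd_def vscale_def unit_vec_def a_def b_def abs_sgn_eq)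
    ultimately show ?thesis using bd in_V2(5) by fastforce
  qed
  have coord0: "(\<lambda>x. x 0) \<in> dual_ball V2 nu2"
    by (auto simp: dual_ball_def linear_on_def vadd_def vscale_def nu2_def)
  show "(SUP phi\<in>dual_ball V2 nu2. \<Sum>j<2. \<bar>phi (unit_vec j)\<bar>) \<le> 1"
    using coord0 bound by (intro cSUP_least) auto
  have "(\<Sum>j<2. \<bar>unit_vec j 0\<bar>) \<le> (SUP phi\<in>dual_ball V2 nu2. \<Sum>j<2. \<bar>phi (unit_vec j)\<bar>)"
    using bound by (intro cSUP_upper[OF coord0, of "\<lambda>phi. \<Sum>j<2. \<bar>phi (unit_vec j)\<bar>", simplified]
        bdd_aboveI2)
  then show "1 \<le> (SUP phi\<in>dual_ball V2 nu2. \<Sum>j<2. \<bar>phi (unit_vec j)\<bar>)"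
    by (simp add: numeral_2_eq_2 unit_vec_def)
qed

lemma prod_fun_upd:
  assumes "finite F"
  shows "(\<Prod>l\<in>F. (v(i := z)) l a) = (if i \<in> F then z a else 1) * (\<Prod>l\<in>F-{i}. v l a)"
proof (cases "i \<in> F")
  case True
  have "(\<Prod>l\<in>F-{i}. (v(i := z)) l a) = (\<Prod>l\<in>F-{i}. v l a)"
    by (rule prod.cong) auto
  with True show ?thesis by (simp add: prod.remove[OF assms True])
next
  case False
  then show ?thesis by (auto intro: prod.cong)
qed

definition sym_form :: "nat \<Rightarrow> (nat \<Rightarrow> real) \<Rightarrow> (nat \<Rightarrow> vec) \<Rightarrow> real" where
  "sym_form m c v = (\<Sum>S\<in>Pow {..<m}. c (card S) * (\<Prod>i\<in>S. v i 0) * (\<Prod>i\<in>{..<m}-S. v i 1))"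

(* The form is an affine combination of the two coordinates of each single argument;
   this gives linearity in every slot. *)
lemma sym_form_slot:
  assumes "i < m"
  shows "sym_form m c (v(i := z)) =
    (\<Sum>S\<in>Pow {..<m}. (if i \<in> S then z 0 else z 1) *
        (c (card S) * (\<Prod>l\<in>S-{i}. v l 0) * (\<Prod>l\<in>{..<m}-S-{i}. v l 1)))"
  unfolding sym_form_def
proof (rule sum.cong[OF refl])
  fix S assume "S \<in> Pow {..<m}"
  then have fin: "finite S" "finite ({..<m} - S)" by (auto intro: finite_subset)
  show "c (card S) * (\<Prod>l\<in>S. (v(i := z)) l 0) * (\<Prod>l\<in>{..<m}-S. (v(i := z)) l 1) =
      (if i \<in> S then z 0 else z 1) *
        (c (card S) * (\<Prod>l\<in>S-{i}. v l 0) * (\<Prod>l\<in>{..<m}-S-{i}. v l 1))"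
    by (simp only: prod_fun_upd[OF fin(1)] prod_fun_upd[OF fin(2)]) (use assms in auto)
qed

lemma sym_form_add:
  assumes "i < m"
  shows "sym_form m c (v(i := vadd (v i) y)) = sym_form m c v + sym_form m c (v(i := y))"
proof -
  note slot = sym_form_slot[OF assms, of c]
  have "sym_form m c v = sym_form m c (v(i := v i))" by simp
  then show ?thesis
    by (simp only: slot) (auto simp: vadd_def sum.distrib[symmetric] algebra_simps intro!: sum.cong)
qed

lemma sym_form_scale:
  assumes "i < m"
  shows "sym_form m c (v(i := vscale a (v i))) = a * sym_form m c v"
proof -
  note slot = sym_form_slot[OF assms, of c]
  have "sym_form m c v = sym_form m c (v(i := v i))" by simp
  then show ?thesis
    by (simp only: slot) (auto simp: vscale_def sum_distrib_left algebra_simps intro!: sum.cong)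
qed

(* Symmetry: permuting the arguments permutes the index subsets S. *)
lemma sym_form_perm:
  assumes "\<sigma> permutes {..<m}"
  shows "sym_form m c (v \<circ> \<sigma>) = sym_form m c v"
proof -
  have bij: "bij_betw \<sigma> {..<m} {..<m}" using assms by (rule permutes_imp_bij)
  have term_eq: "c (card (\<sigma> ` S)) * (\<Prod>i\<in>\<sigma> ` S. v i 0) * (\<Prod>i\<in>{..<m} - \<sigma> ` S. v i 1) =
      c (card S) * (\<Prod>i\<in>S. (v \<circ> \<sigma>) i 0) * (\<Prod>i\<in>{..<m} - S. (v \<circ> \<sigma>) i 1)"
    if "S \<in> Pow {..<m}" for S
  proof -
    have inj: "inj_on \<sigma> S" "inj_on \<sigma> ({..<m} - S)"
      using that bij by (auto intro: inj_on_subset simp: bij_betw_def)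
    have "\<sigma> ` ({..<m} - S) = \<sigma> ` {..<m} - \<sigma> ` S"
      using that bij by (intro inj_on_image_set_diff[of _ "{..<m}"]) (auto simp: bij_betw_def)
    then have "{..<m} - \<sigma> ` S = \<sigma> ` ({..<m} - S)"
      using bij by (simp add: bij_betw_def)
    then show ?thesis using inj by (simp add: prod.reindex card_image)
  qed
  have "sym_form m c v = (\<Sum>S\<in>Pow {..<m}.
      c (card (\<sigma> ` S)) * (\<Prod>i\<in>\<sigma> ` S. v i 0) * (\<Prod>i\<in>{..<m} - \<sigma> ` S. v i 1))"
    unfolding sym_form_def by (rule sum.reindex_bij_betw[OF bij_betw_image_Pow[OF bij], symmetric])
  also have "\<dots> = sym_form m c (v \<circ> \<sigma>)"
    unfolding sym_form_def by (rule sum.cong[OF refl]) (rule term_eq)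
  finally show ?thesis ..
qed

lemma sym_form_term_bound:
  fixes m :: nat
  assumes "S \<subseteq> {..<m}"
  shows "\<bar>(\<Prod>i\<in>S. v i 0) * (\<Prod>i\<in>{..<m}-S. v i 1)\<bar> \<le> (\<Prod>j<m. nu2 (v j))"
proof -
  have "\<bar>(\<Prod>i\<in>S. v i 0) * (\<Prod>i\<in>{..<m}-S. v i 1)\<bar> =
      (\<Prod>i\<in>S. \<bar>v i 0\<bar>) * (\<Prod>i\<in>{..<m}-S. \<bar>v i 1\<bar>)"
    by (simp add: abs_mult abs_prod)
  also have "\<dots> \<le> (\<Prod>i\<in>S. nu2 (v i)) * (\<Prod>i\<in>{..<m}-S. nu2 (v i))"
    by (intro mult_mono prod_mono prod_nonneg) (auto simp: nu2_def)
  also have "\<dots> = (\<Prod>j<m. nu2 (v j))"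
    by (simp add: prod.subset_diff[OF assms finite_lessThan] mult.commute)
  finally show ?thesis .
qed

lemma sym_form_bound:
  "\<bar>sym_form m c v\<bar> \<le> (\<Sum>S\<in>Pow {..<m}. \<bar>c (card S)\<bar>) * (\<Prod>j<m. nu2 (v j))"
proof -
  have "\<bar>sym_form m c v\<bar> \<le> (\<Sum>S\<in>Pow {..<m}. \<bar>c (card S)\<bar> * \<bar>(\<Prod>i\<in>S. v i 0) * (\<Prod>i\<in>{..<m}-S. v i 1)\<bar>)"
    unfolding sym_form_def by (rule order_trans[OF sum_abs]) (simp add: abs_mult mult.assoc)
  also have "\<dots> \<le> (\<Sum>S\<in>Pow {..<m}. \<bar>c (card S)\<bar> * (\<Prod>j<m. nu2 (v j)))"
    by (intro sum_mono mult_left_mono sym_form_term_bound) auto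
  finally show ?thesis by (simp add: sum_distrib_right)
qed

lemma sym_form_multilinear: "sym_multilinear_bdd V2 nu2 m (sym_form m c)"
  unfolding sym_multilinear_bdd_def
proof (intro conjI allI impI)
  fix v w :: "nat \<Rightarrow> vec" assume "\<forall>i<m. v i = w i"
  then show "sym_form m c v = sym_form m c w"
    unfolding sym_form_def by (intro sum.cong refl arg_cong2[where f = "(*)"] prod.cong) auto
next
  show "\<exists>C. \<forall>v. (\<forall>j<m. v j \<in> V2) \<longrightarrow> \<bar>sym_form m c v\<bar> \<le> C * (\<Prod>j<m. nu2 (v j))"
    using sym_form_bound by blast
qed (simp_all add: sym_form_add sym_form_scale sym_form_perm)

lemma prod_indicator:
  assumes "finite F"
  shows "(\<Prod>i\<in>F. if P i then 1 else 0 :: real) = (if \<forall>i\<in>F. P i then 1 else 0)"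
  using assms by (induction F rule: finite_induct) auto

(* On a tuple of unit vectors only the monomial S = {i. j_i = 0} survives. *)
lemma sym_form_unit_vecs:
  assumes jj: "jj \<in> PiE {..<m} (\<lambda>_. {..<2::nat})"
  shows "sym_form m c (\<lambda>i. unit_vec (jj i)) = c (card {i\<in>{..<m}. jj i = 0})"
proof -
  let ?Z = "{i\<in>{..<m}. jj i = 0}"
  have unit0: "unit_vec (jj i) 0 = (if jj i = 0 then 1 else 0)" for i
    by (simp add: unit_vec_def)
  have unit1: "unit_vec (jj i) 1 = (if jj i \<noteq> 0 then 1 else 0)" if "i < m" for i
  proof -
    have "jj i < 2" using jj that by (auto simp: PiE_iff)
    then show ?thesis by (auto simp: unit_vec_def)
  qed
  have term_eq: "(\<Prod>i\<in>S. unit_vec (jj i) 0) * (\<Prod>i\<in>{..<m}-S. unit_vec (jj i) 1) =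
      (if S = ?Z then 1 else 0)" if S: "S \<subseteq> {..<m}" for S
  proof -
    have fin: "finite S" using S by (rule finite_subset) simp
    have "(\<Prod>i\<in>{..<m}-S. unit_vec (jj i) 1) = (\<Prod>i\<in>{..<m}-S. if jj i \<noteq> 0 then 1 else 0)"
      by (rule prod.cong[OF refl], rule unit1) auto
    then have "(\<Prod>i\<in>S. unit_vec (jj i) 0) * (\<Prod>i\<in>{..<m}-S. unit_vec (jj i) 1) =
        (if (\<forall>i\<in>S. jj i = 0) \<and> (\<forall>i\<in>{..<m}-S. jj i \<noteq> 0) then 1 else 0)"
      by (simp only: unit0 prod_indicator[OF fin] prod_indicator[OF finite_Diff[OF finite_lessThan]])
        simp
    also have "((\<forall>i\<in>S. jj i = 0) \<and> (\<forall>i\<in>{..<m}-S. jj i \<noteq> 0)) \<longleftrightarrow> S = ?Z"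
    proof
      assume A: "(\<forall>i\<in>S. jj i = 0) \<and> (\<forall>i\<in>{..<m}-S. jj i \<noteq> 0)"
      show "S = ?Z"
      proof (intro equalityI subsetI)
        fix i assume i: "i \<in> ?Z"
        show "i \<in> S"
        proof (rule ccontr)
          assume "i \<notin> S"
          with i A have "jj i \<noteq> 0" by blast
          with i show False by simp
        qed
      qed (use A S in auto)
    qed auto
    finally show ?thesis .
  qed
  have "sym_form m c (\<lambda>i. unit_vec (jj i)) = (\<Sum>S\<in>Pow {..<m}. if S = ?Z then c (card S) else 0)"
    unfolding sym_form_def mult.assoc
    by (intro sum.cong refl) (use term_eq in auto)
  also have "\<dots> = c (card ?Z)" by (simp add: sum.delta subset_eq)
  finally show ?thesis .
qed

(* Tuples in {0,1}^m correspond bijectively to the subsets of {0..m-1} (their zero sets). *)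
lemma sum_binary_tuples:
  fixes m :: nat
  shows "(\<Sum>jj\<in>PiE {..<m} (\<lambda>_. {..<2::nat}). g (card {i\<in>{..<m}. jj i = 0})) =
         (\<Sum>S\<in>Pow {..<m}. g (card S))"
proof (rule sum.reindex_bij_witness[where j = "\<lambda>jj. {i\<in>{..<m}. jj i = 0}"
      and i = "\<lambda>S i. if i < m then (if i \<in> S then 0 else 1) else undefined"])
  fix jj assume "jj \<in> PiE {..<m} (\<lambda>_. {..<2::nat})"
  then show "(\<lambda>i. if i < m then if i \<in> {i\<in>{..<m}. jj i = 0} then 0 else 1 else undefined) = jj"
    by (auto simp: PiE_def Pi_def extensional_def fun_eq_iff)
qed (auto simp: PiE_iff extensional_def)

lemma sum_Pow_card:
  fixes m :: nat and g :: "nat \<Rightarrow> real"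
  shows "(\<Sum>S\<in>Pow {..<m}. g (card S)) = (\<Sum>j=0..m. real (m choose j) * g j)"
proof -
  have card_le: "card ` Pow {..<m} \<subseteq> {0..m}"
  proof
    fix n assume "n \<in> card ` Pow {..<m}"
    then obtain S where "S \<subseteq> {..<m}" "n = card S" by auto
    then show "n \<in> {0..m}" using card_mono[of "{..<m}" S] by simp
  qed
  have "(\<Sum>S\<in>Pow {..<m}. g (card S)) = (\<Sum>j=0..m. \<Sum>S\<in>{S\<in>Pow {..<m}. card S = j}. g (card S))"
    by (rule sum.group[symmetric]) (simp_all add: card_le)
  also have "\<dots> = (\<Sum>j=0..m. real (m choose j) * g j)"
  proof (rule sum.cong[OF refl])
    fix j
    have "{S\<in>Pow {..<m}. card S = j} = {S. S \<subseteq> {..<m} \<and> card S = j}" by auto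
    then have "card {S\<in>Pow {..<m}. card S = j} = m choose j"
      using n_subsets[of "{..<m}" j] by simp
    then show "(\<Sum>S\<in>{S\<in>Pow {..<m}. card S = j}. g (card S)) = real (m choose j) * g j"
      by simp
  qed
  finally show ?thesis .
qed

lemma sym_form_diagonal:
  "sym_form m c (\<lambda>_. x) = (\<Sum>j=0..m. real (m choose j) * (c j * x 0 ^ j * x 1 ^ (m - j)))"
proof -
  have "sym_form m c (\<lambda>_. x) = (\<Sum>S\<in>Pow {..<m}. c (card S) * x 0 ^ card S * x 1 ^ (m - card S))"
    unfolding sym_form_def
    by (intro sum.cong refl) (auto simp: card_Diff_subset finite_subset)
  also have "\<dots> = (\<Sum>j=0..m. real (m choose j) * (c j * x 0 ^ j * x 1 ^ (m - j)))"
    by (rule sum_Pow_card)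
  finally show ?thesis .
qed

(* Testing an admissible constant on sym_form m c and the unit vectors of l_inf^2:
   a lower bound for L by the coefficient sequence c. *)
lemma BH_lower_bound:
  fixes m :: nat and c :: "nat \<Rightarrow> real"
  assumes "BH_admissible m L"
  shows "(\<Sum>j=0..m. real (m choose j) * \<bar>c j\<bar> powr (2 * real m / (real m + 1)))
           powr ((real m + 1) / (2 * real m))
         \<le> L * poly_norm V2 nu2 (sym_form m c)"
proof -
  let ?p = "2 * real m / (real m + 1)"
  have "(\<Sum>jj\<in>PiE {..<m} (\<lambda>_. {..<2::nat}). \<bar>sym_form m c (\<lambda>i. unit_vec (jj i))\<bar> powr ?p) =
      (\<Sum>jj\<in>PiE {..<m} (\<lambda>_. {..<2::nat}). \<bar>c (card {i\<in>{..<m}. jj i = 0})\<bar> powr ?p)"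
    by (intro sum.cong refl) (simp add: sym_form_unit_vecs)
  also have "\<dots> = (\<Sum>j=0..m. real (m choose j) * \<bar>c j\<bar> powr ?p)"
    using sum_binary_tuples[where g = "\<lambda>n. \<bar>c n\<bar> powr ?p"]
      sum_Pow_card[where g = "\<lambda>n. \<bar>c n\<bar> powr ?p"] by simp
  finally have tuple_sum: "(\<Sum>jj\<in>PiE {..<m} (\<lambda>_. {..<2::nat}).
      \<bar>sym_form m c (\<lambda>i. unit_vec (jj i))\<bar> powr ?p) = (\<Sum>j=0..m. real (m choose j) * \<bar>c j\<bar> powr ?p)" .
  from assms[unfolded BH_admissible_def, rule_format, of V2 nu2 "sym_form m c" 2 "\<lambda>_. unit_vec",
      OF banach_V2 sym_form_multilinear]
  show ?thesis by (simp add: tuple_sum weak1_norm_unit_vecs unit_vec_in_V2)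
qed

lemma trinomial_double_sum:
  fixes u v w :: "'a::comm_semiring_1"
  shows "(w + (u + v)) ^ k =
    (\<Sum>c\<le>k. \<Sum>l\<le>k-c. of_nat ((k choose c) * (k - c choose l)) * w ^ c * u ^ l * v ^ (k - c - l))"
  by (simp add: binomial_ring[of w] binomial_ring[of u] sum_distrib_left mult_ac)

lemma binomial_product_fact:
  assumes "c + l \<le> k"
  shows "(of_nat ((k choose c) * (k - c choose l)) :: 'a::field_char_0) =
    fact k / (fact l * fact c * fact (k - c - l))"
  using assms by (simp add: binomial_fact field_simps)

(* Reindexing the triangle {(c,l). c + l <= k} by the degree j = c + 2l, which is the
   exponent of x in w^c u^l v^(k-c-l) when w = dxy, u = ax^2, v = by^2. *)
lemma sum_triangle_by_degree:
  fixes F :: "nat \<Rightarrow> nat \<Rightarrow> 'a::comm_monoid_add"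
  shows "(\<Sum>c\<le>k. \<Sum>l\<le>k-c. F c l) =
    (\<Sum>j=0..2*k. \<Sum>l=0..j div 2. if j \<le> k + l then F (j - 2*l) l else 0)"
proof -
  let ?T = "{p\<in>Sigma {0..2*k} (\<lambda>j. {0..j div 2}). fst p \<le> k + snd p}"
  have "(\<Sum>c\<le>k. \<Sum>l\<le>k-c. F c l) = (\<Sum>(c,l)\<in>Sigma {..k} (\<lambda>c. {..k-c}). F c l)"
    by (rule sum.Sigma) auto
  also have "\<dots> = (\<Sum>(j,l)\<in>?T. F (j - 2*l) l)"
    by (rule sum.reindex_bij_witness[where j = "\<lambda>(c,l). (2*l+c, l)" and i = "\<lambda>(j,l). (j-2*l, l)"])
       auto
  also have "\<dots> = (\<Sum>(j,l)\<in>Sigma {0..2*k} (\<lambda>j. {0..j div 2}). if j \<le> k + l then F (j - 2*l) l else 0)"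
    by (subst sum.inter_filter) (auto intro!: sum.cong split: prod.split)
  also have "\<dots> = (\<Sum>j=0..2*k. \<Sum>l=0..j div 2. if j \<le> k + l then F (j - 2*l) l else 0)"
    by (rule sum.Sigma[symmetric]) auto
  finally show ?thesis .
qed

definition trinom_coeff :: "real \<Rightarrow> real \<Rightarrow> real \<Rightarrow> nat \<Rightarrow> nat \<Rightarrow> real" where
  "trinom_coeff a b d k j = (\<Sum>l=0..j div 2. if j \<le> k + l then
      fact k * a ^ l * b ^ (k + l - j) * d ^ (j - 2*l) / (fact l * fact (j - 2*l) * fact (k + l - j))
    else 0)"

lemma trinomial_expansion:
  fixes a b d x y :: real
  shows "(a*x^2 + b*y^2 + d*x*y) ^ k = (\<Sum>j=0..2*k. trinom_coeff a b d k j * x^j * y^(2*k - j))"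
proof -
  define F where "F c l = of_nat ((k choose c) * (k - c choose l)) * (d*x*y) ^ c * (a*x^2) ^ l *
      (b*y^2) ^ (k - c - l)" for c l
  have "(a*x^2 + b*y^2 + d*x*y) ^ k = (\<Sum>c\<le>k. \<Sum>l\<le>k-c. F c l)"
    using trinomial_double_sum[of "d*x*y" "a*x^2" "b*y^2" k] by (simp add: F_def add_ac)
  also have "\<dots> = (\<Sum>j=0..2*k. \<Sum>l=0..j div 2. if j \<le> k + l then F (j - 2*l) l else 0)"
    by (rule sum_triangle_by_degree)
  also have "\<dots> = (\<Sum>j=0..2*k. trinom_coeff a b d k j * x^j * y^(2*k - j))"
    unfolding trinom_coeff_def sum_distrib_right
  proof (intro sum.cong refl)
    fix j l assume j: "j \<in> {0..2*k}" and l: "l \<in> {0..j div 2}"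
    show "(if j \<le> k + l then F (j - 2*l) l else 0) =
      (if j \<le> k + l then fact k * a ^ l * b ^ (k + l - j) * d ^ (j - 2*l) /
         (fact l * fact (j - 2*l) * fact (k + l - j)) else 0) * x^j * y^(2*k - j)"
    proof (cases "j \<le> k + l")
      case True
      define c where "c = j - 2*l"
      define e where "e = k + l - j"
      have deg: "c + l \<le> k" "k - c - l = e" using True j l by (auto simp: c_def e_def)
      have xy: "x^j = x^c * (x^2)^l" "y^(2*k - j) = y^c * (y^2)^e"
        using True j l by (auto simp: c_def e_def simp flip: power_mult power_add
            intro!: arg_cong2[where f = "(^)"])
      have coef: "fact k * a^l * b^e * d^c / (fact l * fact c * fact e) =
          of_nat ((k choose c) * (k - c choose l)) * (a^l * b^e * d^c)"
        by (subst binomial_product_fact[OF deg(1)]) (simp add: deg(2)[simplified] mult.assoc)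
      show ?thesis
        using True unfolding c_def[symmetric] e_def[symmetric] xy coef
        by (simp add: F_def deg(2)[simplified] power_mult_distrib mult_ac)
    qed simp
  qed
  finally show ?thesis .
qed

lemma coeffA_eq_trinom_coeff:
  "coeffA t k j = trinom_coeff t (-t) (2 * sqrt (t * (1 - t))) k j"
proof -
  have term_eq: "fact k * (-1) ^ (k + l - j) * t ^ (k + 2*l - j) * D / Q =
      fact k * t ^ l * (-t) ^ (k + l - j) * D / Q" if "j \<le> k + l" for l D Q
  proof -
    have "k + 2*l - j = l + (k + l - j)" using that by arith
    moreover have "(-t) ^ (k + l - j) = (-1) ^ (k + l - j) * t ^ (k + l - j)" by (rule power_minus)
    ultimately show ?thesis by (simp only: power_add mult_ac)
  qed
  show ?thesis
    unfolding coeffA_def trinom_coeff_def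
    by (intro sum.cong if_cong refl term_eq) simp_all
qed

definition quad :: "real \<Rightarrow> real \<Rightarrow> real \<Rightarrow> real" where
  "quad t x y = t * x^2 - t * y^2 + 2 * sqrt (t * (1 - t)) * x * y"

(* |q(x,y)| <= 1 on the unit square: with a = sqrt t, b = sqrt(1-t), both 1 - q and
   1 + q are sums of nonnegative terms. *)
lemma quad_le_one:
  fixes t x y :: real
  assumes t: "0 \<le> t" "t \<le> 1" and x: "\<bar>x\<bar> \<le> 1" and y: "\<bar>y\<bar> \<le> 1"
  shows "\<bar>quad t x y\<bar> \<le> 1"
proof -
  define a where "a = sqrt t"
  define b where "b = sqrt (1 - t)"
  have a2: "a^2 = t" and b2: "b^2 = 1 - t" and ab: "0 \<le> a * b"
    using t by (auto simp: a_def b_def)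
  have q: "quad t x y = t * x^2 - t * y^2 + 2 * (a * b) * x * y"
    by (simp add: quad_def a_def b_def real_sqrt_mult)
  have "\<bar>x * y\<bar> \<le> \<bar>y\<bar>" "\<bar>x * y\<bar> \<le> \<bar>x\<bar>"
    using x y by (auto simp: abs_mult mult_left_le_one_le mult_right_le_one_le)
  then have xy: "0 \<le> \<bar>y\<bar> - x * y" "0 \<le> \<bar>x\<bar> + x * y" by linarith+
  have "x^2 \<le> 1" "y^2 \<le> 1" using x y by (auto simp: abs_square_le_1)
  then have sq: "0 \<le> t * (1 - x^2)" "0 \<le> t * (1 - y^2)" using t by auto
  have "1 - quad t x y = t * (1 - x^2) + (b - a * \<bar>y\<bar>)^2 + 2 * (a * b) * (\<bar>y\<bar> - x * y)"
    unfolding q power2_diff power_mult_distrib a2 b2 by (simp add: algebra_simps)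
  moreover have "1 + quad t x y = t * (1 - y^2) + (b - a * \<bar>x\<bar>)^2 + 2 * (a * b) * (\<bar>x\<bar> + x * y)"
    unfolding q power2_diff power_mult_distrib a2 b2 by (simp add: algebra_simps)
  moreover have "0 \<le> 2 * (a * b) * (\<bar>y\<bar> - x * y)" "0 \<le> 2 * (a * b) * (\<bar>x\<bar> + x * y)"
    using ab xy by simp_all
  ultimately have "0 \<le> 1 - quad t x y" "0 \<le> 1 + quad t x y"
    using sq zero_le_power2[of "b - a * \<bar>y\<bar>"] zero_le_power2[of "b - a * \<bar>x\<bar>"] by linarith+
  then show ?thesis by linarith
qed

definition test_form :: "real \<Rightarrow> nat \<Rightarrow> (nat \<Rightarrow> vec) \<Rightarrow> real" where
  "test_form t k = sym_form (2*k) (\<lambda>j. coeffA t k j / real (2*k choose j))"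

lemma test_form_diagonal: "test_form t k (\<lambda>_. x) = quad t (x 0) (x 1) ^ k"
proof -
  have "test_form t k (\<lambda>_. x) = (\<Sum>j=0..2*k. coeffA t k j * x 0 ^ j * x 1 ^ (2*k - j))"
    unfolding test_form_def sym_form_diagonal by (intro sum.cong refl) simp
  also have "\<dots> = (\<Sum>j=0..2*k. trinom_coeff t (-t) (2 * sqrt (t * (1 - t))) k j * x 0 ^ j * x 1 ^ (2*k - j))"
    by (simp only: coeffA_eq_trinom_coeff)
  also have "\<dots> = (t * (x 0)^2 + (-t) * (x 1)^2 + 2 * sqrt (t * (1 - t)) * x 0 * x 1) ^ k"
    by (rule trinomial_expansion[symmetric])
  also have "\<dots> = quad t (x 0) (x 1) ^ k"
    by (simp add: quad_def)
  finally show ?thesis .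
qed

(* For 0 < t <= 1 the polynomial q^k has norm in (0,1]: it is t^k at e_0 and |q| <= 1. *)
lemma test_form_norm:
  assumes t: "0 < t" "t \<le> 1"
  shows "0 < poly_norm V2 nu2 (test_form t k)" "poly_norm V2 nu2 (test_form t k) \<le> 1"
proof -
  let ?B = "{x\<in>V2. nu2 x \<le> 1}"
  have bound: "\<bar>test_form t k (\<lambda>_. x)\<bar> \<le> 1" if "x \<in> ?B" for x
  proof -
    have "\<bar>x 0\<bar> \<le> 1" "\<bar>x 1\<bar> \<le> 1" using that coord_le_nu2[of x] by auto
    then have "\<bar>quad t (x 0) (x 1)\<bar> \<le> 1" using t by (intro quad_le_one) auto
    then show ?thesis by (simp add: test_form_diagonal power_abs power_le_one)
  qed
  have e0: "unit_vec 0 \<in> ?B" by (simp add: V2_def unit_vec_def nu2_def)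
  show "poly_norm V2 nu2 (test_form t k) \<le> 1"
    unfolding poly_norm_def using e0 bound by (intro cSUP_least) auto
  have "\<bar>test_form t k (\<lambda>_. unit_vec 0)\<bar> \<le> poly_norm V2 nu2 (test_form t k)"
    unfolding poly_norm_def using bound by (intro cSUP_upper[OF e0] bdd_aboveI2) auto
  moreover have "test_form t k (\<lambda>_. unit_vec 0) = t ^ k"
    by (simp add: test_form_diagonal quad_def unit_vec_def)
  moreover have "0 < t ^ k" using t by simp
  ultimately show "0 < poly_norm V2 nu2 (test_form t k)" by linarith
qed

theorem mainTheorem5:
  fixes t0 :: real and k :: nat and L :: real
  assumes "t0 \<in> {1/2..1}"
    and "\<forall>t\<in>{1/2..1}. f_t t \<le> f_t t0"
    and "k \<ge> 1"
    and "BH_admissible (2 * k) L"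
  shows "L \<ge> (\<Sum>j=0..2*k. real (2*k choose j) *
              \<bar>coeffA t0 k j / real (2*k choose j)\<bar> powr (4 * real k / (2 * real k + 1)))
            powr ((2 * real k + 1) / (4 * real k))"
    (is "L \<ge> ?G")
proof -
  let ?norm = "poly_norm V2 nu2 (test_form t0 k)"
  have norm: "0 < ?norm" "?norm \<le> 1" using assms(1) test_form_norm[of t0 k] by auto
  have bound: "?G \<le> L * ?norm"
    using BH_lower_bound[OF assms(4), of "\<lambda>j. coeffA t0 k j / real (2*k choose j)"]
    by (simp add: test_form_def)
  have "0 \<le> L * ?norm" by (rule order_trans[OF powr_ge_zero bound])
  then have "0 \<le> L" using norm(1) by (simp add: zero_le_mult_iff)
  then have "L * ?norm \<le> L" using norm(2) by (simp add: mult_left_le)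
  with bound show ?thesis by linarith
qed

end
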